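(* Let $S$ be an additively reduced semidomain and $G$ a torsion-free abelian group. Let $f=\sum_{i=0}^n s_ix^{g_i}\in S[G]$ with $g_0>g_1>\dots>g_n$ and $s_i\in S\setminus\{0\}$. Then: (1) if $|\operatorname{supp}(f)|\ge2$ and $2g_1<g_0+g_n$, then $f$ is monolithic; (2) if $|\operatorname{supp}(f)|>3$ and $2g_1\le g_0+g_n$, then $f$ is monolithic.
   Context: A semidomain is a subsemiring (containing $0$ and $1$) of an integral domain. $S$ is additively reduced if $0$ is the only invertible element of $(S,+)$. $G$ carries a fixed total order compatible with addition. $S[G]$ is the semidomain of formal finite sums $\sum_{g\in G}s_gx^g$ with polynomial operations; $\operatorname{supp}(f)$ is the set of exponents with nonzero coefficient. A nonzero $f\in S[G]$ is monolithic if whenever $f=pq$ with $p,q\in S[G]$, one of $p,q$ is a monomial $sx^g$. *)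

theory Defs
  imports "HOL-Library.Poly_Mapping"
begin

definition semidomain :: "'a::idom set \<Rightarrow> bool" where
  "semidomain S \<longleftrightarrow> 0 \<in> S \<and> 1 \<in> S \<and> (\<forall>a\<in>S. \<forall>b\<in>S. a + b \<in> S \<and> a * b \<in> S)"

definition additively_reduced :: "'a::idom set \<Rightarrow> bool" where
  "additively_reduced S \<longleftrightarrow> (\<forall>a\<in>S. (\<exists>b\<in>S. a + b = 0) \<longrightarrow> a = 0)"

text \<open>The semigroup semiring S[G], viewed inside the group ring of G over the ambient domain:
  finitely supported functions G \<rightarrow> R with all coefficients in S; multiplication is convolution.\<close>
definition group_semiring :: "'a::idom set \<Rightarrow> ('g::linordered_ab_group_add \<Rightarrow>\<^sub>0 'a) set" where
  "group_semiring S = {f. \<forall>g. Poly_Mapping.lookup f g \<in> S}"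

definition is_monomial :: "('g::linordered_ab_group_add \<Rightarrow>\<^sub>0 'a::idom) \<Rightarrow> bool" where
  "is_monomial p \<longleftrightarrow> (\<exists>s g. p = Poly_Mapping.single g s)"

definition monolithic :: "'a::idom set \<Rightarrow> ('g::linordered_ab_group_add \<Rightarrow>\<^sub>0 'a) \<Rightarrow> bool" where
  "monolithic S f \<longleftrightarrow> f \<in> group_semiring S \<and> f \<noteq> 0 \<and>
     (\<forall>p\<in>group_semiring S. \<forall>q\<in>group_semiring S. f = p * q \<longrightarrow> is_monomial p \<or> is_monomial q)"

end

theory Submission imports Defs begin

text \<open>Because S is additively reduced, a sum of elements of S vanishes only if every summand
  does, so nothing cancels in a product p q over S and the support of p q is the sumset of the
  supports of p and q. Suppose neither factor is a monomial; let a0 > a1 be the two largest and a'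
  the smallest exponent of p, and b0 > b1, b' likewise for q. Then g0 = a0 + b0, gn = a' + b', and
  a1 + b0, a0 + b1 are exponents of f other than g0, hence at most g1. Therefore
  g0 + gn = (a0 + b') + (a' + b0) \<le> (a0 + b1) + (a1 + b0) \<le> 2 g1, and equality forces p and q to
  be binomials with a0 + b1 = a1 + b0, so that f has at most three terms.\<close>

lemma semidomain_sum_closed:
  assumes "semidomain S" "\<And>x. x \<in> F \<Longrightarrow> t x \<in> S"
  shows "sum t F \<in> S"
  using assms(2)
  by (induction F rule: infinite_finite_induct) (use assms(1) in \<open>auto simp: semidomain_def\<close>)

lemma additively_reduced_sum_nonzero:
  assumes "semidomain S" "additively_reduced S" "finite F" "\<And>x. x \<in> F \<Longrightarrow> t x \<in> S"
    and "y \<in> F" "t y \<noteq> 0"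
  shows "sum t F \<noteq> 0"
proof
  assume "sum t F = 0"
  moreover have "sum t F = t y + sum t (F - {y})"
    using assms(3,5) by (simp add: sum.remove)
  moreover have "sum t (F - {y}) \<in> S"
    by (rule semidomain_sum_closed[OF assms(1)]) (simp add: assms(4))
  ultimately show False
    using assms(2,4,5,6) unfolding additively_reduced_def by metis
qed

lemma add_mono_eq_imp_eq:
  fixes x y :: "'a::ordered_cancel_ab_semigroup_add"
  assumes "x \<le> x'" "y \<le> y'" "x + y = x' + y'"
  shows "x = x'" "y = y'"
  using add_less_le_mono[of x x' y y'] add_le_less_mono[of x x' y y'] assms
  by (auto simp: le_less)

lemma lookup_times_eq_sum_keys:
  "Poly_Mapping.lookup (p * q) k =
     (\<Sum>(a, b)\<in>Poly_Mapping.keys p \<times> Poly_Mapping.keys q.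
        Poly_Mapping.lookup p a * Poly_Mapping.lookup q b when k = a + b)"
proof -
  have "Poly_Mapping.lookup (p * q) k = prod_fun (Poly_Mapping.lookup p) (Poly_Mapping.lookup q) k"
    by (simp add: times_poly_mapping.rep_eq)
  also have "\<dots> = (\<Sum>(a, b). Poly_Mapping.lookup p a * Poly_Mapping.lookup q b when k = a + b)"
    by (rule prod_fun_unfold_prod) (simp_all add: keys_def[symmetric])
  also have "\<dots> = (\<Sum>(a, b)\<in>Poly_Mapping.keys p \<times> Poly_Mapping.keys q.
                     Poly_Mapping.lookup p a * Poly_Mapping.lookup q b when k = a + b)"
    by (rule Sum_any.expand_superset) (auto simp: in_keys_iff)
  finally show ?thesis .
qed

lemma keys_times_group_semiring:
  assumes "semidomain S" "additively_reduced S" "p \<in> group_semiring S" "q \<in> group_semiring S"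
  shows "Poly_Mapping.keys (p * q) =
           {a + b | a b. a \<in> Poly_Mapping.keys p \<and> b \<in> Poly_Mapping.keys q}"
proof
  show "Poly_Mapping.keys (p * q) \<subseteq> {a + b | a b. a \<in> Poly_Mapping.keys p \<and> b \<in> Poly_Mapping.keys q}"
    by (rule keys_mult)
  show "{a + b | a b. a \<in> Poly_Mapping.keys p \<and> b \<in> Poly_Mapping.keys q} \<subseteq> Poly_Mapping.keys (p * q)"
  proof clarify
    fix a b assume ab: "a \<in> Poly_Mapping.keys p" "b \<in> Poly_Mapping.keys q"
    have "(\<Sum>(x, y)\<in>Poly_Mapping.keys p \<times> Poly_Mapping.keys q.
             Poly_Mapping.lookup p x * Poly_Mapping.lookup q y when a + b = x + y) \<noteq> 0"
    proof (rule additively_reduced_sum_nonzero[OF assms(1,2)])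
      fix z assume "z \<in> Poly_Mapping.keys p \<times> Poly_Mapping.keys q"
      then show "(case z of (x, y) \<Rightarrow> Poly_Mapping.lookup p x * Poly_Mapping.lookup q y when a + b = x + y) \<in> S"
        using assms(1,3,4) by (cases z) (auto simp: when_def semidomain_def group_semiring_def)
    qed (use ab in \<open>auto simp: in_keys_iff\<close>)
    then show "a + b \<in> Poly_Mapping.keys (p * q)"
      by (simp add: lookup_times_eq_sum_keys in_keys_iff)
  qed
qed

lemma card_keys_ge_2_if_not_monomial:
  assumes "\<not> is_monomial p"
  shows "2 \<le> card (Poly_Mapping.keys p)"
proof (rule ccontr)
  assume "\<not> 2 \<le> card (Poly_Mapping.keys p)"
  then have "\<forall>x\<in>Poly_Mapping.keys p. \<forall>y\<in>Poly_Mapping.keys p. x = y"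
    by (subst card_le_Suc0_iff_eq[symmetric]) auto
  then obtain a where "Poly_Mapping.keys p \<subseteq> {a}"
    by blast
  then have "p = Poly_Mapping.single a (Poly_Mapping.lookup p a)"
    by (intro poly_mapping_eqI) (auto simp: lookup_single when_def in_keys_iff)
  then show False
    using assms unfolding is_monomial_def by blast
qed

lemma lookup_sum_single_inj:
  assumes "finite I" "inj_on g I" "j \<in> I"
  shows "Poly_Mapping.lookup (\<Sum>i\<in>I. Poly_Mapping.single (g i) (s i)) (g j) = s j"
proof -
  have "(\<Sum>i\<in>I. s i when g i = g j) = (\<Sum>i\<in>I. s i when i = j)"
    using assms(2,3) by (intro sum.cong) (auto simp: when_def inj_on_eq_iff)
  then show ?thesis
    using assms(1,3) by (simp add: lookup_sum lookup_single when_def)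
qed

lemma keys_sum_single_inj:
  assumes "finite I" "inj_on g I" "\<And>i. i \<in> I \<Longrightarrow> s i \<noteq> 0"
  shows "Poly_Mapping.keys (\<Sum>i\<in>I. Poly_Mapping.single (g i) (s i)) = g ` I"
proof
  show "Poly_Mapping.keys (\<Sum>i\<in>I. Poly_Mapping.single (g i) (s i)) \<subseteq> g ` I"
    using keys_sum[of "\<lambda>i. Poly_Mapping.single (g i) (s i)" I] by auto
  show "g ` I \<subseteq> Poly_Mapping.keys (\<Sum>i\<in>I. Poly_Mapping.single (g i) (s i))"
    using lookup_sum_single_inj[OF assms(1,2), where s = s] assms(3) by (auto simp: in_keys_iff)
qed

lemma sum_single_in_group_semiring:
  assumes "semidomain S" "\<And>i. i \<in> I \<Longrightarrow> s i \<in> S"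
  shows "(\<Sum>i\<in>I. Poly_Mapping.single (g i) (s i)) \<in> group_semiring S"
  using assms(2) unfolding group_semiring_def
  by (auto simp: lookup_sum lookup_single when_def intro!: semidomain_sum_closed[OF assms(1)])
     (use assms(1) in \<open>simp add: semidomain_def\<close>)

lemma finite_obtain_top_two_and_bottom:
  fixes A :: "'a::linorder set"
  assumes "finite A" "2 \<le> card A"
  obtains a0 a1 a' where "a0 \<in> A" "a1 \<in> A" "a' \<in> A" "a1 < a0"
    "\<forall>x\<in>A. x \<le> a0" "\<forall>x\<in>A - {a0}. x \<le> a1" "\<forall>x\<in>A. a' \<le> x"
proof -
  have "A \<noteq> {}"
    using assms(2) by auto
  moreover have "A - {Max A} \<noteq> {}"
  proof
    assume "A - {Max A} = {}"
    then have "card A \<le> card {Max A}"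
      by (intro card_mono) auto
    then show False
      using assms(2) by simp
  qed
  moreover have "Max (A - {Max A}) \<in> A - {Max A}"
    using assms(1) \<open>A - {Max A} \<noteq> {}\<close> by (intro Max_in) auto
  ultimately show ?thesis
    using assms(1) by (intro that[of "Max A" "Max (A - {Max A})" "Min A"]) (auto simp: less_le)
qed

lemma sumset_greatest_eq:
  fixes A B :: "'a::ordered_ab_semigroup_add set"
  assumes "a0 \<in> A" "\<forall>x\<in>A. x \<le> a0" "b0 \<in> B" "\<forall>x\<in>B. x \<le> b0"
    and "c0 \<in> {a + b | a b. a \<in> A \<and> b \<in> B}" "\<And>x. x \<in> {a + b | a b. a \<in> A \<and> b \<in> B} \<Longrightarrow> x \<le> c0"
  shows "c0 = a0 + b0"
proof (rule antisym)
  from assms(5) obtain x y where "c0 = x + y" "x \<in> A" "y \<in> B"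
    by blast
  then show "c0 \<le> a0 + b0"
    using assms(2,4) by (simp add: add_mono)
  show "a0 + b0 \<le> c0"
    using assms(1,3,6) by blast
qed

lemma sumset_least_eq:
  fixes A B :: "'a::ordered_ab_semigroup_add set"
  assumes "a' \<in> A" "\<forall>x\<in>A. a' \<le> x" "b' \<in> B" "\<forall>x\<in>B. b' \<le> x"
    and "c \<in> {a + b | a b. a \<in> A \<and> b \<in> B}" "\<And>x. x \<in> {a + b | a b. a \<in> A \<and> b \<in> B} \<Longrightarrow> c \<le> x"
  shows "c = a' + b'"
proof (rule antisym)
  show "c \<le> a' + b'"
    using assms(1,3,6) by blast
  from assms(5) obtain x y where "c = x + y" "x \<in> A" "y \<in> B"
    by blast
  then show "a' + b' \<le> c"
    using assms(2,4) by (simp add: add_mono)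
qed

lemma card_sumset_of_binomials_le_3:
  assumes "A \<subseteq> {a0, a1}" "B \<subseteq> {b0, b1}" "a0 + b1 = a1 + (b0 :: 'a::ab_semigroup_add)"
  shows "card {a + b | a b. a \<in> A \<and> b \<in> B} \<le> 3"
proof -
  have "{a + b | a b. a \<in> A \<and> b \<in> B} \<subseteq> {a0 + b0, a0 + b1, a1 + b1}"
    using assms by auto
  then show ?thesis
    by (rule card_mono[rotated, THEN order_trans]) (auto simp: card_insert_if)
qed

lemma sumset_top_bottom_second_bound:
  fixes A B :: "'a::linordered_cancel_ab_semigroup_add set"
  assumes "finite A" "finite B" "2 \<le> card A" "2 \<le> card B"
    and C: "C = {a + b | a b. a \<in> A \<and> b \<in> B}"
    and top: "c0 \<in> C" "\<And>x. x \<in> C \<Longrightarrow> x \<le> c0"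
    and second: "\<And>x. x \<in> C - {c0} \<Longrightarrow> x \<le> c1"
    and bottom: "cmin \<in> C" "\<And>x. x \<in> C \<Longrightarrow> cmin \<le> x"
  shows "c0 + cmin \<le> c1 + c1" and "c0 + cmin = c1 + c1 \<Longrightarrow> card C \<le> 3"
proof -
  obtain a0 a1 a' where A: "a0 \<in> A" "a1 \<in> A" "a' \<in> A" "a1 < a0"
    "\<forall>x\<in>A. x \<le> a0" "\<forall>x\<in>A - {a0}. x \<le> a1" "\<forall>x\<in>A. a' \<le> x"
    using finite_obtain_top_two_and_bottom[OF assms(1,3)] by blast
  obtain b0 b1 b' where B: "b0 \<in> B" "b1 \<in> B" "b' \<in> B" "b1 < b0"
    "\<forall>x\<in>B. x \<le> b0" "\<forall>x\<in>B - {b0}. x \<le> b1" "\<forall>x\<in>B. b' \<le> x"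
    using finite_obtain_top_two_and_bottom[OF assms(2,4)] by blast
  have c0: "c0 = a0 + b0"
    using sumset_greatest_eq[OF A(1,5) B(1,5)] top unfolding C by blast
  have cmin: "cmin = a' + b'"
    using sumset_least_eq[OF A(3,7) B(3,7)] bottom unfolding C by blast
  have "a1 + b0 < c0" "a0 + b1 < c0"
    using A(4) B(4) by (simp_all add: c0)
  then have a1b0: "a1 + b0 \<le> c1" and a0b1: "a0 + b1 \<le> c1"
    using second A(1,2) B(1,2) unfolding C by blast+
  have lower: "c0 + cmin = (a0 + b') + (a' + b0)"
    by (simp add: c0 cmin ac_simps)
  have "a' \<le> a1" "b' \<le> b1"
    using A(2,7) B(2,7) by simp_all
  then have mid: "(a0 + b') + (a' + b0) \<le> (a0 + b1) + (a1 + b0)"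
    by (simp add: add_mono)
  have upper: "(a0 + b1) + (a1 + b0) \<le> c1 + c1"
    using a0b1 a1b0 by (rule add_mono)
  show "c0 + cmin \<le> c1 + c1"
    using lower mid upper by simp
  show "card C \<le> 3" if eq: "c0 + cmin = c1 + c1"
  proof -
    have "(a0 + b') + (a' + b0) = (a0 + b1) + (a1 + b0)"
      using eq lower mid upper by (simp add: antisym)
    then have "a' = a1" "b' = b1"
      using add_mono_eq_imp_eq[of "a0 + b'" "a0 + b1" "a' + b0" "a1 + b0"] \<open>a' \<le> a1\<close> \<open>b' \<le> b1\<close>
      by simp_all
    then have binomials: "A \<subseteq> {a0, a1}" "B \<subseteq> {b0, b1}"
      using A(6,7) B(6,7) by (auto intro: antisym)
    have "(a0 + b1) + (a1 + b0) = c1 + c1"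
      using eq lower mid upper by (simp add: antisym)
    then have "a0 + b1 = a1 + b0"
      using add_mono_eq_imp_eq[OF a0b1 a1b0] by simp
    with binomials show ?thesis
      unfolding C by (rule card_sumset_of_binomials_le_3)
  qed
qed

lemma monolithicI_exponent_bound:
  assumes "semidomain S" "additively_reduced S" "f \<in> group_semiring S" "f \<noteq> 0"
    and "c0 \<in> Poly_Mapping.keys f" "\<And>x. x \<in> Poly_Mapping.keys f \<Longrightarrow> x \<le> c0"
    and "\<And>x. x \<in> Poly_Mapping.keys f - {c0} \<Longrightarrow> x \<le> c1"
    and "cmin \<in> Poly_Mapping.keys f" "\<And>x. x \<in> Poly_Mapping.keys f \<Longrightarrow> cmin \<le> x"
    and "c1 + c1 < c0 + cmin \<or> c1 + c1 \<le> c0 + cmin \<and> 3 < card (Poly_Mapping.keys f)"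
  shows "monolithic S f"
  unfolding monolithic_def
proof (intro conjI assms(3,4) ballI impI)
  fix p q assume pq: "p \<in> group_semiring S" "q \<in> group_semiring S" "f = p * q"
  show "is_monomial p \<or> is_monomial q"
  proof (rule ccontr)
    assume "\<not> (is_monomial p \<or> is_monomial q)"
    then have "2 \<le> card (Poly_Mapping.keys p)" "2 \<le> card (Poly_Mapping.keys q)"
      using card_keys_ge_2_if_not_monomial by blast+
    note bound = sumset_top_bottom_second_bound[OF finite_keys finite_keys this
        keys_times_group_semiring[OF assms(1,2) pq(1,2), folded pq(3)] assms(5-9)]
    show False
      using bound assms(10) by (auto simp: antisym)
  qed
qed

theorem lemma3p2:
  fixes S :: "'a::idom set"
    and g :: "nat \<Rightarrow> 'g::linordered_ab_group_add"
    and s :: "nat \<Rightarrow> 'a"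
    and n :: nat
    and f :: "'g \<Rightarrow>\<^sub>0 'a"
  assumes "semidomain S"
    and "additively_reduced S"
    and "\<And>i j. i < j \<Longrightarrow> j \<le> n \<Longrightarrow> g j < g i"
    and "\<And>i. i \<le> n \<Longrightarrow> s i \<in> S - {0}"
    and "f = (\<Sum>i\<le>n. Poly_Mapping.single (g i) (s i))"
  shows "(card (Poly_Mapping.keys f) \<ge> 2 \<and> g 1 + g 1 < g 0 + g n \<longrightarrow> monolithic S f)
       \<and> (card (Poly_Mapping.keys f) > 3 \<and> g 1 + g 1 \<le> g 0 + g n \<longrightarrow> monolithic S f)"
proof -
  have antimono: "g j \<le> g i" if "i \<le> j" "j \<le> n" for i j
    using assms(3)[of i j] that by (cases "i = j") auto
  have "inj_on g {..n}"
    using assms(3) by (intro inj_onI) (metis atMost_iff linorder_neqE_nat less_irrefl)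
  then have keys: "Poly_Mapping.keys f = g ` {..n}"
    unfolding assms(5) using assms(4) by (intro keys_sum_single_inj) auto
  have "f \<in> group_semiring S"
    unfolding assms(5) using assms(4) by (intro sum_single_in_group_semiring[OF assms(1)]) auto
  moreover have "f \<noteq> 0"
    using keys by auto
  moreover have "x \<le> g 1" if x: "x \<in> Poly_Mapping.keys f - {g 0}" for x
  proof -
    obtain i where "i \<le> n" "i \<noteq> 0" "x = g i"
      using x keys by auto
    then show ?thesis
      using antimono[of 1 i] by simp
  qed
  ultimately have "g 1 + g 1 < g 0 + g n \<or> g 1 + g 1 \<le> g 0 + g n \<and> 3 < card (Poly_Mapping.keys f)
      \<Longrightarrow> monolithic S f"
    using keys antimono by (intro monolithicI_exponent_bound[OF assms(1,2)]) auto
  then show ?thesis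
    by (auto simp: less_imp_le)
qed

end
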